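(* For every odd $n\geq 5$, there exists a smooth nondegenerate line fibration of $\mathbb R^n$ such that the hyperplane distribution orthogonal to the fibers is not a contact structure.
   Context: A smooth line fibration of $\mathbb R^n$ is given by a smooth unit vector field $V$ on $\mathbb R^n$ all of whose integral curves are straight lines (equivalently $\nabla_V V\equiv 0$); the fibers are these oriented lines. It is nondegenerate if at every point the covariant derivative $\nabla V$ vanishes only in the direction of $V$, i.e. $\nabla_X V=0$ implies $X$ is a multiple of $V$. The orthogonal hyperplane distribution is $V^\perp$, the kernel of the $1$-form dual to $V$; it is a contact structure if this $1$-form $\alpha$ satisfies $\alpha\wedge(d\alpha)^{(n-1)/2}\neq 0$ everywhere. *)

theory Defs
  imports "HOL-Analysis.Analysis"
begin

fun Ck :: "nat \<Rightarrow> ('a::euclidean_space \<Rightarrow> 'b::real_normed_vector) \<Rightarrow> bool" where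
  "Ck 0 f = continuous_on UNIV f"
| "Ck (Suc k) f = (f differentiable_on UNIV \<and>
      (\<forall>v. Ck k (\<lambda>x. frechet_derivative f (at x) v)))"

definition smooth_map :: "('a::euclidean_space \<Rightarrow> 'b::real_normed_vector) \<Rightarrow> bool" where
  "smooth_map f \<longleftrightarrow> (\<forall>k. Ck k f)"

text \<open>Covariant derivative (flat connection) of a vector field V in direction X at p.\<close>
definition cov_deriv :: "(real^'n \<Rightarrow> real^'n) \<Rightarrow> real^'n \<Rightarrow> real^'n \<Rightarrow> real^'n" where
  "cov_deriv V p X = frechet_derivative V (at p) X"

definition line_fibration :: "(real^'n \<Rightarrow> real^'n) \<Rightarrow> bool" where
  "line_fibration V \<longleftrightarrow> smooth_map V \<and> (\<forall>p. norm (V p) = 1) \<and>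
     (\<forall>p. cov_deriv V p (V p) = 0)"

definition nondegenerate_fibration :: "(real^'n \<Rightarrow> real^'n) \<Rightarrow> bool" where
  "nondegenerate_fibration V \<longleftrightarrow>
     (\<forall>p X. cov_deriv V p X = 0 \<longrightarrow> (\<exists>c. X = c *\<^sub>R V p))"

text \<open>The dual 1-form alpha = <V,.> at p, and its exterior derivative
  d alpha_p(X,Y) = X(alpha(Y)) - Y(alpha(X)) (for constant fields X, Y).\<close>
definition dual_form :: "(real^'n \<Rightarrow> real^'n) \<Rightarrow> real^'n \<Rightarrow> real^'n \<Rightarrow> real" where
  "dual_form V p X = V p \<bullet> X"

definition d_dual_form :: "(real^'n \<Rightarrow> real^'n) \<Rightarrow> real^'n \<Rightarrow> real^'n \<Rightarrow> real^'n \<Rightarrow> real" where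
  "d_dual_form V p X Y = cov_deriv V p X \<bullet> Y - cov_deriv V p Y \<bullet> X"

text \<open>(a \<and> w^k)(v_0,...,v_2k) for a 1-form a and 2-form w on a vector space,
  by the alternation formula (normalization 1/2^k, wedge of alternating forms).\<close>
definition wedge_alpha_omega_pow ::
  "nat \<Rightarrow> ('v \<Rightarrow> real) \<Rightarrow> ('v \<Rightarrow> 'v \<Rightarrow> real) \<Rightarrow> (nat \<Rightarrow> 'v) \<Rightarrow> real" where
  "wedge_alpha_omega_pow k a w v =
     (1 / 2 ^ k) * (\<Sum>\<sigma> | \<sigma> permutes {0..<2*k+1}.
        of_int (sign \<sigma>) * a (v (\<sigma> 0)) *
        (\<Prod>j<k. w (v (\<sigma> (2*j+1))) (v (\<sigma> (2*j+2)))))"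

text \<open>V^perp = ker alpha is a contact structure: alpha \<and> (d alpha)^((n-1)/2) nowhere zero.\<close>
definition orth_contact :: "(real^'n \<Rightarrow> real^'n) \<Rightarrow> bool" where
  "orth_contact V \<longleftrightarrow> (\<forall>p. \<exists>v. wedge_alpha_omega_pow ((CARD('n) - 1) div 2)
       (dual_form V p) (d_dual_form V p) v \<noteq> 0)"

end

theory Submission
  imports Defs
begin

(*
  Write points of R^n as z + s es with z orthogonal to the unit vector es, let J be a complex
  structure on es^perp, E a nilpotent map commuting with J, and A = J + 2E. The fibres are the
  lines {y + s (A y + es)} for y in es^perp. Since A has no real eigenvalue, 1 + s A is
  invertible and the line through z + s es has direction (s + A^-1)^-1 z + es, where
  A^-1 = 2E - J; nondegeneracy comes from the invertibility of (s + A^-1)^-1. At the origin the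
  covariant derivative of the unit field is A, so alpha = <es, .> and
  d alpha (X, Y) = <A X, Y> - <A Y, X>. A vector kappa orthogonal to es with
  <A z, kappa> = <A kappa, z> for all z lies in the kernel of both forms, so
  alpha /\ (d alpha)^((n-1)/2) vanishes at the origin. In coordinates such a kappa exists as
  soon as n - 1 >= 4.
*)

section \<open>Smooth maps generated by elementary operations\<close>

lemma smooth_map_if_derivative_closed:
  fixes Q :: "('a::euclidean_space \<Rightarrow> 'b::real_normed_vector) \<Rightarrow> bool"
  assumes closed: "\<And>f. Q f \<Longrightarrow>
      \<exists>f'. (\<forall>x. (f has_derivative f' x) (at x)) \<and> (\<forall>v. Q (\<lambda>x. f' x v))"
    and "Q f"
  shows "smooth_map f"
proof -
  have "Ck k f" if "Q f" for k f
    using that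
  proof (induction k arbitrary: f)
    case 0
    then obtain f' where "\<forall>x. (f has_derivative f' x) (at x)"
      using closed by blast
    then show ?case
      by (auto intro!: continuous_at_imp_continuous_on has_derivative_continuous)
  next
    case (Suc k)
    then obtain f' where f': "\<forall>x. (f has_derivative f' x) (at x)" "\<forall>v. Q (\<lambda>x. f' x v)"
      using closed by blast
    then have "frechet_derivative f (at x) = f' x" for x
      by (metis frechet_derivative_at)
    with f' Suc.IH show ?case
      by (auto simp: differentiable_on_def differentiable_def)
  qed
  with \<open>Q f\<close> show ?thesis
    by (simp add: smooth_map_def)
qed

inductive elementary_smooth :: "('a::euclidean_space \<Rightarrow> real) \<Rightarrow> bool" where
  elementary_smooth_const: "elementary_smooth (\<lambda>x. c)"
| elementary_smooth_linear: "linear f \<Longrightarrow> elementary_smooth f"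
| elementary_smooth_add:
    "elementary_smooth f \<Longrightarrow> elementary_smooth g \<Longrightarrow> elementary_smooth (\<lambda>x. f x + g x)"
| elementary_smooth_mult:
    "elementary_smooth f \<Longrightarrow> elementary_smooth g \<Longrightarrow> elementary_smooth (\<lambda>x. f x * g x)"
| elementary_smooth_inverse:
    "elementary_smooth f \<Longrightarrow> (\<forall>x. 0 < f x) \<Longrightarrow> elementary_smooth (\<lambda>x. inverse (f x))"
| elementary_smooth_inverse_sqrt:
    "elementary_smooth f \<Longrightarrow> (\<forall>x. 0 < f x) \<Longrightarrow> elementary_smooth (\<lambda>x. inverse (sqrt (f x)))"

lemma elementary_smooth_uminus: "elementary_smooth f \<Longrightarrow> elementary_smooth (\<lambda>x. - f x)"
  using elementary_smooth_mult[OF elementary_smooth_const[of "-1"]] by simp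

lemma elementary_smooth_diff:
  "elementary_smooth f \<Longrightarrow> elementary_smooth g \<Longrightarrow> elementary_smooth (\<lambda>x. f x - g x)"
  using elementary_smooth_add[OF _ elementary_smooth_uminus, of f g] by simp

lemma elementary_smooth_sum:
  "finite A \<Longrightarrow> (\<And>j. j \<in> A \<Longrightarrow> elementary_smooth (f j)) \<Longrightarrow>
    elementary_smooth (\<lambda>x. \<Sum>j\<in>A. f j x)"
  by (induction A rule: finite_induct) (auto intro: elementary_smooth.intros)

lemma has_derivative_inverse_pos:
  fixes f :: "'a::real_normed_vector \<Rightarrow> real"
  assumes "(f has_derivative f') (at x)" and "0 < f x"
  shows "((\<lambda>x. inverse (f x)) has_derivative (\<lambda>h. - (f' h * inverse (f x) * inverse (f x)))) (at x)"
  using assms by (auto intro!: derivative_eq_intros simp: field_simps)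

lemma has_derivative_inverse_sqrt_pos:
  fixes f :: "'a::real_normed_vector \<Rightarrow> real"
  assumes "(f has_derivative f') (at x)" and "0 < f x"
  shows "((\<lambda>x. inverse (sqrt (f x))) has_derivative
      (\<lambda>h. f' h * inverse (sqrt (f x)) * inverse (f x) * (- 1 / 2))) (at x)"
  using assms by (auto intro!: derivative_eq_intros simp: field_simps)

lemma elementary_smooth_has_derivative:
  assumes "elementary_smooth f"
  shows "\<exists>f'. (\<forall>x. (f has_derivative f' x) (at x)) \<and> (\<forall>v. elementary_smooth (\<lambda>x. f' x v))"
  using assms
proof induction
  case (elementary_smooth_const c)
  show ?case
    by (rule exI[of _ "\<lambda>x h. 0"]) (auto intro: elementary_smooth.intros)
next
  case (elementary_smooth_linear f)
  then show ?case
    by (intro exI[of _ "\<lambda>x. f"])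
      (auto intro: elementary_smooth.intros bounded_linear_imp_has_derivative
        simp: linear_conv_bounded_linear)
next
  case (elementary_smooth_add f g)
  then obtain f' g' where "\<forall>x. (f has_derivative f' x) (at x)" "\<forall>v. elementary_smooth (\<lambda>x. f' x v)"
    "\<forall>x. (g has_derivative g' x) (at x)" "\<forall>v. elementary_smooth (\<lambda>x. g' x v)"
    by blast
  then show ?case
    by (intro exI[of _ "\<lambda>x h. f' x h + g' x h"] conjI allI has_derivative_add
        elementary_smooth.elementary_smooth_add) auto
next
  case (elementary_smooth_mult f g)
  then obtain f' g' where "\<forall>x. (f has_derivative f' x) (at x)" "\<forall>v. elementary_smooth (\<lambda>x. f' x v)"
    "\<forall>x. (g has_derivative g' x) (at x)" "\<forall>v. elementary_smooth (\<lambda>x. g' x v)"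
    by blast
  with elementary_smooth_mult.hyps show ?case
    by (intro exI[of _ "\<lambda>x h. f x * g' x h + f' x h * g x"] conjI allI has_derivative_mult
        elementary_smooth.elementary_smooth_add elementary_smooth.elementary_smooth_mult) auto
next
  case (elementary_smooth_inverse f)
  then obtain f' where "\<forall>x. (f has_derivative f' x) (at x)" "\<forall>v. elementary_smooth (\<lambda>x. f' x v)"
    by blast
  with elementary_smooth_inverse.hyps show ?case
    by (intro exI[of _ "\<lambda>x h. - (f' x h * inverse (f x) * inverse (f x))"] conjI allI
        has_derivative_inverse_pos elementary_smooth_uminus elementary_smooth.elementary_smooth_mult
        elementary_smooth.elementary_smooth_inverse) auto
next
  case (elementary_smooth_inverse_sqrt f)
  then obtain f' where "\<forall>x. (f has_derivative f' x) (at x)" "\<forall>v. elementary_smooth (\<lambda>x. f' x v)"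
    by blast
  with elementary_smooth_inverse_sqrt.hyps show ?case
    by (intro exI[of _ "\<lambda>x h. f' x h * inverse (sqrt (f x)) * inverse (f x) * (- 1 / 2)"] conjI allI
        has_derivative_inverse_sqrt_pos elementary_smooth.elementary_smooth_mult
        elementary_smooth.elementary_smooth_const elementary_smooth.elementary_smooth_inverse
        elementary_smooth.elementary_smooth_inverse_sqrt) auto
qed

definition elementary_smooth_vec :: "('a::euclidean_space \<Rightarrow> real^'m) \<Rightarrow> bool" where
  "elementary_smooth_vec V \<longleftrightarrow> (\<forall>i. elementary_smooth (\<lambda>x. V x $ i))"

lemma elementary_smooth_vec_has_derivative:
  fixes V :: "'a::euclidean_space \<Rightarrow> real^'m"
  assumes "elementary_smooth_vec V"
  shows "\<exists>V'. (\<forall>x. (V has_derivative V' x) (at x)) \<and> (\<forall>v. elementary_smooth_vec (\<lambda>x. V' x v))"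
proof -
  have "\<forall>i. \<exists>f'. (\<forall>x. ((\<lambda>x. V x $ i) has_derivative f' x) (at x)) \<and>
      (\<forall>v. elementary_smooth (\<lambda>x. f' x v))"
    using assms elementary_smooth_has_derivative unfolding elementary_smooth_vec_def by blast
  then obtain f' where f': "\<And>i x. ((\<lambda>x. V x $ i) has_derivative f' i x) (at x)"
    "\<And>i v. elementary_smooth (\<lambda>x. f' i x v)"
    by metis
  have "(V has_derivative (\<lambda>h. \<chi> i. f' i x h)) (at x)" for x
  proof (rule has_derivative_componentwise_within[THEN iffD2], rule ballI)
    fix b :: "real^'m"
    assume "b \<in> Basis"
    then obtain j where b: "b = axis j 1"
      by (auto simp: Basis_vec_def)
    show "((\<lambda>x. V x \<bullet> b) has_derivative (\<lambda>h. (\<chi> i. f' i x h) \<bullet> b)) (at x)"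
      using f'(1)[of j x] by (simp add: b inner_axis)
  qed
  moreover have "elementary_smooth_vec (\<lambda>x. \<chi> i. f' i x v)" for v
    using f'(2) by (simp add: elementary_smooth_vec_def)
  ultimately show ?thesis
    by (intro exI[of _ "\<lambda>x h. \<chi> i. f' i x h"]) blast
qed

lemma smooth_map_if_elementary_smooth_vec: "elementary_smooth_vec V \<Longrightarrow> smooth_map V"
  by (rule smooth_map_if_derivative_closed[OF elementary_smooth_vec_has_derivative])

lemma elementary_smooth_vec_sgn:
  assumes "elementary_smooth_vec F" and "\<And>x. F x \<noteq> 0"
  shows "elementary_smooth_vec (\<lambda>x. sgn (F x))"
proof -
  have sq: "elementary_smooth (\<lambda>x. \<Sum>j\<in>UNIV. F x $ j * F x $ j)"
    using assms(1) unfolding elementary_smooth_vec_def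
    by (intro elementary_smooth_sum elementary_smooth_mult) auto
  have "sgn (F x) $ i = inverse (sqrt (\<Sum>j\<in>UNIV. F x $ j * F x $ j)) * F x $ i" for x i
    by (simp add: sgn_div_norm norm_eq_sqrt_inner inner_vec_def divide_inverse_commute)
  moreover have "0 < (\<Sum>j\<in>UNIV. F x $ j * F x $ j)" for x
    using assms(2)[of x] inner_gt_zero_iff[of "F x"] by (simp add: inner_vec_def)
  ultimately show ?thesis
    using assms(1) unfolding elementary_smooth_vec_def
    by (auto intro!: elementary_smooth_mult elementary_smooth_inverse_sqrt sq)
qed

section \<open>Alternating forms on low-dimensional subspaces\<close>

lemma alternating_multilinear_eq_0_if_dim_lt:
  fixes \<Phi> :: "(nat \<Rightarrow> 'v::euclidean_space) \<Rightarrow> real"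
  assumes slot_linear: "\<And>u i. i < N \<Longrightarrow> linear (\<lambda>x. \<Phi> (u(i := x)))"
    and alternating: "\<And>u i j. i < N \<Longrightarrow> j < N \<Longrightarrow> i \<noteq> j \<Longrightarrow> u i = u j \<Longrightarrow> \<Phi> u = 0"
    and W: "subspace W" "dim W < N" and u: "\<And>i. i < N \<Longrightarrow> u i \<in> W"
  shows "\<Phi> u = 0"
proof (cases "inj_on u {..<N}")
  case False
  then show ?thesis
    unfolding inj_on_def using alternating by blast
next
  case True
  let ?S = "u ` {..<N}"
  have "card ?S = N"
    using True by (simp add: card_image)
  moreover have "?S \<subseteq> W"
    using u by auto
  ultimately have "dependent ?S"
    using independent_card_le_dim[of ?S W] W by auto
  then obtain i where i: "i < N" and "u i \<in> span (?S - {u i})"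
    unfolding dependent_def by blast
  then obtain c where c: "u i = (\<Sum>z\<in>?S - {u i}. c z *\<^sub>R z)"
    using span_finite[of "?S - {u i}"] by auto
  have "\<Phi> u = \<Phi> (u(i := \<Sum>z\<in>?S - {u i}. c z *\<^sub>R z))"
    using c by (metis fun_upd_triv)
  also have "\<dots> = (\<Sum>z\<in>?S - {u i}. c z * \<Phi> (u(i := z)))"
    using linear_sum[OF slot_linear[OF i], where g = "\<lambda>z. c z *\<^sub>R z"]
      linear_scale[OF slot_linear[OF i]] by simp
  also have "\<dots> = 0"
  proof (intro sum.neutral ballI)
    fix z
    assume "z \<in> ?S - {u i}"
    then obtain j where "j < N" "z = u j" "j \<noteq> i"
      by auto
    then show "c z * \<Phi> (u(i := z)) = 0"
      using alternating[of i j "u(i := z)"] i by simp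
  qed
  finally show ?thesis .
qed

definition wedge_monomial ::
  "nat \<Rightarrow> ('v \<Rightarrow> real) \<Rightarrow> ('v \<Rightarrow> 'v \<Rightarrow> real) \<Rightarrow> (nat \<Rightarrow> 'v) \<Rightarrow> real" where
  "wedge_monomial k a w v = a (v 0) * (\<Prod>j<k. w (v (2*j+1)) (v (2*j+2)))"

lemma wedge_alpha_omega_pow_eq_sum_monomials:
  "wedge_alpha_omega_pow k a w v =
    1 / 2 ^ k * (\<Sum>\<sigma> | \<sigma> permutes {0..<2*k+1}. of_int (sign \<sigma>) * wedge_monomial k a w (v \<circ> \<sigma>))"
  unfolding wedge_alpha_omega_pow_def wedge_monomial_def by (simp add: mult.assoc)

lemma linear_mult_const_real: "linear (f :: 'v::real_vector \<Rightarrow> real) \<Longrightarrow> linear (\<lambda>x. f x * c)"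
  by (rule linearI) (simp_all add: linear_add linear_scale algebra_simps)

lemma wedge_monomial_slot_linear:
  fixes a :: "'v::real_vector \<Rightarrow> real"
  assumes a: "linear a" and w: "bilinear w" and i: "i < 2*k+1"
  shows "linear (\<lambda>x. wedge_monomial k a w (u(i := x)))"
  using i
proof (induction k)
  case 0
  then show ?case
    using a by (simp add: wedge_monomial_def)
next
  case (Suc k)
  have split: "wedge_monomial (Suc k) a w v =
      wedge_monomial k a w v * w (v (2*k+1)) (v (2*k+2))" for v
    by (simp add: wedge_monomial_def mult.assoc)
  show ?case
  proof (cases "i < 2*k+1")
    case True
    have "linear (\<lambda>x. wedge_monomial k a w (u(i := x)) * w (u (2*k+1)) (u (2*k+2)))"
      by (rule linear_mult_const_real[OF Suc.IH[OF True]])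
    then show ?thesis
      unfolding split using True by simp
  next
    case False
    then have i: "i = 2*k+1 \<or> i = 2*k+2"
      using Suc.prems by auto
    have "wedge_monomial k a w (u(i := x)) = wedge_monomial k a w u" for x
      using False by (simp add: wedge_monomial_def)
    moreover have "linear (\<lambda>x. w ((u(i := x)) (2*k+1)) ((u(i := x)) (2*k+2)))"
      using i w by (auto simp: bilinear_def)
    ultimately show ?thesis
      unfolding split using linear_mult_const_real by (simp add: mult.commute)
  qed
qed

lemma wedge_alpha_omega_pow_slot_linear:
  fixes a :: "'v::real_vector \<Rightarrow> real"
  assumes a: "linear a" and w: "bilinear w" and i: "i < 2*k+1"
  shows "linear (\<lambda>x. wedge_alpha_omega_pow k a w (u(i := x)))"
proof -
  have "linear (\<lambda>x. wedge_monomial k a w (u(i := x) \<circ> \<sigma>) * of_int (sign \<sigma>))"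
    if \<sigma>: "\<sigma> permutes {0..<2*k+1}" for \<sigma>
  proof -
    have "u(i := x) \<circ> \<sigma> = (u \<circ> \<sigma>)(inv \<sigma> i := x)" for x
    proof
      fix y
      show "(u(i := x) \<circ> \<sigma>) y = ((u \<circ> \<sigma>)(inv \<sigma> i := x)) y"
        using permutes_inverses[OF \<sigma>] by (cases "y = inv \<sigma> i") auto
    qed
    moreover have "inv \<sigma> i < 2*k+1"
      using permutes_in_image[OF permutes_inv[OF \<sigma>], of i] i by simp
    ultimately show ?thesis
      by (simp add: linear_mult_const_real wedge_monomial_slot_linear[OF a w])
  qed
  then have "linear (\<lambda>x. (\<Sum>\<sigma> | \<sigma> permutes {0..<2*k+1}.
      wedge_monomial k a w (u(i := x) \<circ> \<sigma>) * of_int (sign \<sigma>)) * (1 / 2 ^ k))"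
    by (intro linear_mult_const_real linear_compose_sum) (auto simp: finite_permutations)
  then show ?thesis
    unfolding wedge_alpha_omega_pow_eq_sum_monomials by (simp add: ac_simps)
qed

lemma wedge_alpha_omega_pow_eq_0_if_repeated:
  assumes "i < 2*k+1" "j < 2*k+1" "i \<noteq> j" and "u i = u j"
  shows "wedge_alpha_omega_pow k a w u = 0"
proof -
  let ?S = "{0..<2*k+1}" and ?\<tau> = "Transposition.transpose i j"
  let ?f = "\<lambda>\<sigma>. of_int (sign \<sigma>) * wedge_monomial k a w (u \<circ> \<sigma>) :: real"
  have \<tau>: "?\<tau> permutes ?S"
    using assms by (simp add: permutes_swap_id)
  have "?f (?\<tau> \<circ> \<sigma>) = - ?f \<sigma>" if "\<sigma> permutes ?S" for \<sigma>
  proof -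
    have "sign (?\<tau> \<circ> \<sigma>) = - sign \<sigma>"
      using sign_compose[OF permutes_imp_permutation[OF _ \<tau>] permutes_imp_permutation[OF _ that]]
        assms by (simp add: sign_swap_id)
    moreover have "u \<circ> (?\<tau> \<circ> \<sigma>) = u \<circ> \<sigma>"
      using assms(4) by (auto simp: fun_eq_iff Transposition.transpose_def)
    ultimately show ?thesis
      by simp
  qed
  then have "sum ?f {\<sigma>. \<sigma> permutes ?S} = - sum ?f {\<sigma>. \<sigma> permutes ?S}"
    using setum_permutations_compose_left[OF \<tau>, of ?f] by (simp add: sum_negf)
  then show ?thesis
    unfolding wedge_alpha_omega_pow_eq_sum_monomials by simp
qed

lemma wedge_alpha_omega_pow_eq_0_if_dim_lt:
  fixes a :: "'v::euclidean_space \<Rightarrow> real"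
  assumes "linear a" "bilinear w" "subspace W" "dim W < 2*k+1"
    and "\<And>i. i < 2*k+1 \<Longrightarrow> u i \<in> W"
  shows "wedge_alpha_omega_pow k a w u = 0"
proof (rule alternating_multilinear_eq_0_if_dim_lt
    [where N = "2*k+1" and \<Phi> = "wedge_alpha_omega_pow k a w"])
  show "linear (\<lambda>x. wedge_alpha_omega_pow k a w (v(i := x)))" if "i < 2*k+1" for v i
    using assms(1,2) that by (rule wedge_alpha_omega_pow_slot_linear)
  show "wedge_alpha_omega_pow k a w v = 0"
    if "i < 2*k+1" "j < 2*k+1" "i \<noteq> j" "v i = v j" for v i j
    using that by (rule wedge_alpha_omega_pow_eq_0_if_repeated)
qed (use assms in auto)

section \<open>The fibration defined by a complex structure and a nilpotent map\<close>

lemma has_derivative_sgn: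
  fixes F :: "'a::real_normed_vector \<Rightarrow> 'b::real_inner"
  assumes F: "(F has_derivative F') (at x)" and nz: "F x \<noteq> 0"
  shows "((\<lambda>x. sgn (F x)) has_derivative
      (\<lambda>h. inverse (norm (F x)) *\<^sub>R (F' h - (F' h \<bullet> sgn (F x)) *\<^sub>R sgn (F x)))) (at x)"
proof -
  have "((\<lambda>x. norm (F x)) has_derivative (\<lambda>h. F' h \<bullet> sgn (F x))) (at x)"
    using has_derivative_compose[OF F has_derivative_norm[OF nz]] .
  then have "((\<lambda>x. inverse (norm (F x)) *\<^sub>R F x) has_derivative
      (\<lambda>h. inverse (norm (F x)) *\<^sub>R F' h +
        (- (inverse (norm (F x)) * (F' h \<bullet> sgn (F x)) * inverse (norm (F x)))) *\<^sub>R F x)) (at x)"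
    using nz by (auto intro!: derivative_eq_intros F)
  then show ?thesis
    unfolding sgn_div_norm
    by (rule has_derivative_eq_rhs) (simp add: fun_eq_iff algebra_simps)
qed

lemma has_derivative_compose_vector_derivative:
  assumes "(f has_derivative f') (at x)" and "(c has_vector_derivative c') (at (f x))"
  shows "((\<lambda>x. c (f x)) has_derivative (\<lambda>h. f' h *\<^sub>R c')) (at x)"
  using has_derivative_compose[OF assms(1) assms(2)[unfolded has_vector_derivative_def]] .

definition inv_minus_i :: "real \<Rightarrow> complex" where
  "inv_minus_i t = inverse (complex_of_real t - \<i>)"

lemma of_real_minus_i_nonzero: "complex_of_real t - \<i> \<noteq> 0"
  by (simp add: complex_eq_iff)

lemma inv_minus_i_nonzero: "inv_minus_i t \<noteq> 0"
  using of_real_minus_i_nonzero by (simp add: inv_minus_i_def)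

lemma inv_minus_i_0: "inv_minus_i 0 = \<i>"
  by (simp add: inv_minus_i_def)

lemma Re_inv_minus_i: "Re (inv_minus_i t) = t * inverse (1 + t * t)"
  and Im_inv_minus_i: "Im (inv_minus_i t) = inverse (1 + t * t)"
  by (simp_all add: inv_minus_i_def power2_eq_square divide_inverse)

lemma inv_minus_i_vector_derivative:
  "(inv_minus_i has_vector_derivative - (inv_minus_i t ^ 2)) (at t)"
  and inv_minus_i_sq_vector_derivative:
  "((\<lambda>t. inv_minus_i t ^ 2) has_vector_derivative - (2 * inv_minus_i t ^ 3)) (at t)"
proof -
  note nz = of_real_minus_i_nonzero[of t]
  have "((\<lambda>z. inverse (z - \<i>)) has_field_derivative - (inverse (complex_of_real t - \<i>) ^ 2))
      (at (complex_of_real t))"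
    using nz by (auto intro!: derivative_eq_intros simp: power2_eq_square)
  then show "(inv_minus_i has_vector_derivative - (inv_minus_i t ^ 2)) (at t)"
    unfolding inv_minus_i_def[abs_def] by (rule has_vector_derivative_real_field)
  have "((\<lambda>z. inverse (z - \<i>) ^ 2) has_field_derivative - (2 * inverse (complex_of_real t - \<i>) ^ 3))
      (at (complex_of_real t))"
    using nz by (auto intro!: derivative_eq_intros simp: power2_eq_square power3_eq_cube)
  then show "((\<lambda>t. inv_minus_i t ^ 2) has_vector_derivative - (2 * inv_minus_i t ^ 3)) (at t)"
    unfolding inv_minus_i_def[abs_def] by (rule has_vector_derivative_real_field)
qed

lemma elementary_smooth_inv_minus_i:
  assumes "linear f"
  shows "elementary_smooth (\<lambda>x. Re (inv_minus_i (f x)))"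
    and "elementary_smooth (\<lambda>x. Im (inv_minus_i (f x)))"
    and "elementary_smooth (\<lambda>x. Re (inv_minus_i (f x) ^ 2))"
    and "elementary_smooth (\<lambda>x. Im (inv_minus_i (f x) ^ 2))"
proof -
  have w: "elementary_smooth (\<lambda>x. inverse (1 + f x * f x))"
    using assms by (intro elementary_smooth.intros) (auto simp: add_pos_nonneg)
  show re: "elementary_smooth (\<lambda>x. Re (inv_minus_i (f x)))"
    unfolding Re_inv_minus_i
    by (rule elementary_smooth_mult[OF elementary_smooth_linear[OF assms] w])
  show im: "elementary_smooth (\<lambda>x. Im (inv_minus_i (f x)))"
    unfolding Im_inv_minus_i by (fact w)
  show "elementary_smooth (\<lambda>x. Re (inv_minus_i (f x) ^ 2))"
    unfolding power2_eq_square times_complex.sel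
    by (intro elementary_smooth_diff elementary_smooth_mult re im)
  show "elementary_smooth (\<lambda>x. Im (inv_minus_i (f x) ^ 2))"
    unfolding power2_eq_square times_complex.sel
    by (intro elementary_smooth_add elementary_smooth_mult re im)
qed

locale fibration_data =
  fixes es :: "real^'n" and J E :: "real^'n \<Rightarrow> real^'n" and \<kappa> :: "real^'n"
  assumes es_unit: "es \<bullet> es = 1"
    and linear_J: "linear J" and linear_E: "linear E"
    and J_es: "J es = 0" and E_es: "E es = 0"
    and es_J: "es \<bullet> J x = 0" and es_E: "es \<bullet> E x = 0"
    and J_J: "J (J x) = (es \<bullet> x) *\<^sub>R es - x"
    and E_E: "E (E x) = 0" and E_J: "E (J x) = J (E x)"
    and kernel_nonzero: "\<kappa> \<noteq> 0" and es_kernel: "es \<bullet> \<kappa> = 0"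
    and kernel_symmetric: "(J z + 2 *\<^sub>R E z) \<bullet> \<kappa> = (J \<kappa> + 2 *\<^sub>R E \<kappa>) \<bullet> z"
begin

lemmas J_E_linear =
  linear_add[OF linear_J] linear_diff[OF linear_J] linear_scale[OF linear_J] linear_0[OF linear_J]
  linear_add[OF linear_E] linear_diff[OF linear_E] linear_scale[OF linear_E] linear_0[OF linear_E]

definition proj :: "real^'n \<Rightarrow> real^'n" where
  "proj x = x - (es \<bullet> x) *\<^sub>R es"

(* Scalar multiplication of the complex vector space (es^perp, J). *)
definition cscale :: "complex \<Rightarrow> real^'n \<Rightarrow> real^'n" where
  "cscale z y = Re z *\<^sub>R y + Im z *\<^sub>R J y"

lemma linear_proj: "linear proj"
  by (rule linearI) (simp_all add: proj_def inner_add_right algebra_simps)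

lemma es_proj: "es \<bullet> proj x = 0"
  by (simp add: proj_def inner_diff_right es_unit)

lemma proj_eq_self: "es \<bullet> y = 0 \<Longrightarrow> proj y = y"
  by (simp add: proj_def)

lemma J_proj: "J (proj x) = J x" and E_proj: "E (proj x) = E x"
  by (simp_all add: proj_def J_E_linear J_es E_es)

lemma bilinear_cscale: "bilinear cscale"
  unfolding bilinear_def cscale_def
  by (auto intro!: linearI simp: J_E_linear algebra_simps)

lemma linear_cscale: "linear (cscale z)"
  using bilinear_cscale by (simp add: bilinear_def)

lemma cscale_scaleR_left: "cscale (r *\<^sub>R z) y = r *\<^sub>R cscale z y"
  and cscale_numeral_mult_left: "cscale (numeral k * z) y = numeral k *\<^sub>R cscale z y"
  and cscale_minus_left: "cscale (- z) y = - cscale z y"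
  by (simp_all add: cscale_def algebra_simps)

lemma cscale_1: "cscale 1 y = y" and cscale_i: "cscale \<i> y = J y"
  by (simp_all add: cscale_def)

lemma es_cscale: "es \<bullet> cscale z y = Re z * (es \<bullet> y)"
  by (simp add: cscale_def inner_add_right es_J)

lemma E_cscale: "E (cscale z y) = cscale z (E y)"
  by (simp add: cscale_def J_E_linear E_J)

lemma cscale_cscale: "es \<bullet> y = 0 \<Longrightarrow> cscale z (cscale w y) = cscale (z * w) y"
  by (simp add: cscale_def J_E_linear J_J algebra_simps)

lemma cscale_eq_0_imp:
  assumes "es \<bullet> y = 0" "z \<noteq> 0" "cscale z y = 0"
  shows "y = 0"
proof -
  have "y = cscale (inverse z) (cscale z y)"
    using assms(1,2) by (simp add: cscale_cscale cscale_1)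
  with assms(3) show ?thesis
    by (simp add: linear_0[OF linear_cscale])
qed

(* The inverse of t - J + 2E on es^perp: with J acting as i and E^2 = 0 it is
   (t - i)^-1 - 2 (t - i)^-2 E. *)
definition M :: "real \<Rightarrow> real^'n \<Rightarrow> real^'n" where
  "M t y = cscale (inv_minus_i t) (proj y) - 2 *\<^sub>R cscale (inv_minus_i t ^ 2) (E y)"

definition F :: "real^'n \<Rightarrow> real^'n" where
  "F x = M (es \<bullet> x) x + es"

definition dF :: "real^'n \<Rightarrow> real^'n \<Rightarrow> real^'n" where
  "dF x h = M (es \<bullet> x) (h - (es \<bullet> h) *\<^sub>R F x)"

definition V :: "real^'n \<Rightarrow> real^'n" where
  "V x = sgn (F x)"

lemma linear_M: "linear (M t)"
  by (rule linearI) (simp_all add: M_def linear_add[OF linear_cscale] linear_scale[OF linear_cscale]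
      linear_add[OF linear_proj] linear_scale[OF linear_proj] J_E_linear algebra_simps)

lemma es_M: "es \<bullet> M t y = 0"
  by (simp add: M_def inner_diff_right es_cscale es_proj es_E)

lemma M_es: "M t es = 0"
  by (simp add: M_def proj_def es_unit E_es linear_0[OF linear_cscale])

lemma E_M: "E (M t y) = cscale (inv_minus_i t) (E y)"
  by (simp add: M_def J_E_linear E_cscale E_proj E_E linear_0[OF linear_cscale])

lemma M_M:
  "M t (M t y) = cscale (inv_minus_i t ^ 2) (proj y) - 4 *\<^sub>R cscale (inv_minus_i t ^ 3) (E y)"
proof -
  let ?a = "inv_minus_i t"
  have "M t (M t y) = cscale ?a (M t y) - 2 *\<^sub>R cscale (?a ^ 2) (cscale ?a (E y))"
    by (simp add: M_def[of t "M t y"] proj_eq_self es_M E_M)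
  also have "\<dots> = cscale (?a ^ 2) (proj y) - 4 *\<^sub>R cscale (?a ^ 3) (E y)"
    by (simp add: M_def linear_diff[OF linear_cscale] linear_scale[OF linear_cscale] cscale_cscale
        es_proj es_cscale es_E power2_eq_square power3_eq_cube mult.assoc)
  finally show ?thesis .
qed

lemma M_eq_0_imp: "M t y = 0 \<Longrightarrow> proj y = 0"
proof -
  assume M0: "M t y = 0"
  have "cscale (inv_minus_i t) (E y) = 0"
    using arg_cong[OF M0, of E] by (simp add: E_M J_E_linear)
  then have "E y = 0"
    by (rule cscale_eq_0_imp[OF es_E inv_minus_i_nonzero])
  then have "cscale (inv_minus_i t) (proj y) = 0"
    using M0 by (simp add: M_def linear_0[OF linear_cscale])
  then show "proj y = 0"
    by (rule cscale_eq_0_imp[OF es_proj inv_minus_i_nonzero])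
qed

lemma es_F: "es \<bullet> F x = 1"
  by (simp add: F_def inner_add_right es_M es_unit)

lemma F_nonzero: "F x \<noteq> 0"
  using es_F[of x] by auto

lemma F_has_derivative: "(F has_derivative dF x) (at x)"
proof -
  let ?t = "es \<bullet> x"
  let ?a = "inv_minus_i ?t"
  have es: "((\<lambda>x. es \<bullet> x) has_derivative (\<lambda>h. es \<bullet> h)) (at x)"
    by (rule bounded_linear_imp_has_derivative[OF bounded_linear_inner_right])
  have proj: "(proj has_derivative proj) (at x)" and E: "(E has_derivative E) (at x)"
    using linear_proj linear_E
    by (simp_all add: linear_conv_bounded_linear bounded_linear_imp_has_derivative)
  have cs: "bounded_bilinear cscale"
    using bilinear_cscale by (simp add: bilinear_conv_bounded_bilinear)
  have raw: "(F has_derivative (\<lambda>h. (cscale ?a (proj h) + cscale ((es \<bullet> h) *\<^sub>R - (?a ^ 2)) (proj x))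
        - 2 *\<^sub>R (cscale (?a ^ 2) (E h) + cscale ((es \<bullet> h) *\<^sub>R - (2 * ?a ^ 3)) (E x)))) (at x)"
    unfolding F_def[abs_def] M_def
    by (intro has_derivative_add_const has_derivative_diff has_derivative_scaleR_right
        bounded_bilinear.FDERIV[OF cs] proj E
        has_derivative_compose_vector_derivative[OF es inv_minus_i_vector_derivative]
        has_derivative_compose_vector_derivative[OF es inv_minus_i_sq_vector_derivative])
  have M_shift: "M ?t (h - (es \<bullet> h) *\<^sub>R F x) = M ?t h - (es \<bullet> h) *\<^sub>R M ?t (M ?t x)" for h
    by (simp add: F_def linear_diff[OF linear_M] linear_scale[OF linear_M] linear_add[OF linear_M]
        M_es)
  show ?thesis
    unfolding dF_def[abs_def] M_shift M_M
    by (rule has_derivative_eq_rhs[OF raw])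
      (simp add: fun_eq_iff M_def cscale_scaleR_left cscale_numeral_mult_left cscale_minus_left
        algebra_simps)
qed

lemma es_dF: "es \<bullet> dF x h = 0"
  by (simp add: dF_def es_M)

lemma dF_eq_0_imp: "dF x h = 0 \<Longrightarrow> h = (es \<bullet> h) *\<^sub>R F x"
proof -
  assume "dF x h = 0"
  then have "proj (h - (es \<bullet> h) *\<^sub>R F x) = 0"
    unfolding dF_def by (rule M_eq_0_imp)
  moreover have "es \<bullet> (h - (es \<bullet> h) *\<^sub>R F x) = 0"
    by (simp add: inner_diff_right es_F)
  ultimately show ?thesis
    by (simp add: proj_eq_self)
qed

lemma cov_deriv_V: "cov_deriv V x h = inverse (norm (F x)) *\<^sub>R (dF x h - (dF x h \<bullet> V x) *\<^sub>R V x)"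
  unfolding cov_deriv_def V_def[abs_def]
    frechet_derivative_at[OF has_derivative_sgn[OF F_has_derivative F_nonzero], symmetric]
  by simp

lemma elementary_smooth_cscale:
  assumes "elementary_smooth (\<lambda>x. Re (c x))" "elementary_smooth (\<lambda>x. Im (c x))" "linear L"
  shows "elementary_smooth (\<lambda>x. cscale (c x) (L x) $ i)"
proof -
  note nth = bounded_linear_vec_nth[THEN bounded_linear.linear]
  have "linear (\<lambda>x. L x $ i)" "linear (\<lambda>x. J (L x) $ i)"
    using linear_compose[OF assms(3) nth]
      linear_compose[OF linear_compose[OF assms(3) linear_J] nth]
    by (simp_all add: o_def)
  then show ?thesis
    unfolding cscale_def using assms(1,2)
    by (simp add: elementary_smooth_add elementary_smooth_mult elementary_smooth_linear)
qed

lemma elementary_smooth_vec_F: "elementary_smooth_vec F"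
proof -
  have es: "linear (\<lambda>x. es \<bullet> x)"
    by (simp add: bounded_linear_inner_right linear_conv_bounded_linear)
  have "elementary_smooth (\<lambda>x. cscale (inv_minus_i (es \<bullet> x)) (proj x) $ i
      - 2 * cscale (inv_minus_i (es \<bullet> x) ^ 2) (E x) $ i + es $ i)" for i
    by (intro elementary_smooth_add elementary_smooth_diff elementary_smooth_mult
        elementary_smooth_const elementary_smooth_cscale elementary_smooth_inv_minus_i[OF es]
        linear_proj linear_E)
  then show ?thesis
    by (simp add: elementary_smooth_vec_def F_def M_def)
qed

lemma line_fibration_V: "line_fibration V"
proof -
  have "smooth_map V"
    unfolding V_def[abs_def]
    by (intro smooth_map_if_elementary_smooth_vec elementary_smooth_vec_sgn elementary_smooth_vec_F
        F_nonzero)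
  moreover have "norm (V x) = 1" for x
    by (simp add: V_def norm_sgn F_nonzero)
  moreover have "cov_deriv V x (V x) = 0" for x
  proof -
    have "dF x (V x) = 0"
      by (simp add: dF_def V_def sgn_div_norm inner_scaleR_right es_F linear_0[OF linear_M])
    then show ?thesis
      by (simp add: cov_deriv_V)
  qed
  ultimately show ?thesis
    by (simp add: line_fibration_def)
qed

lemma nondegenerate_fibration_V: "nondegenerate_fibration V"
  unfolding nondegenerate_fibration_def
proof (intro allI impI)
  fix x h
  assume "cov_deriv V x h = 0"
  then have D: "dF x h = (dF x h \<bullet> V x) *\<^sub>R V x"
    using F_nonzero by (simp add: cov_deriv_V)
  have "es \<bullet> V x \<noteq> 0"
    using F_nonzero by (simp add: V_def sgn_div_norm es_F)
  moreover have "(dF x h \<bullet> V x) * (es \<bullet> V x) = 0"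
    using arg_cong[OF D, of "inner es"] by (simp add: es_dF)
  ultimately have "dF x h = 0"
    using D by simp
  then have "h = (es \<bullet> h) *\<^sub>R F x"
    by (rule dF_eq_0_imp)
  moreover have "F x = norm (F x) *\<^sub>R V x"
    using F_nonzero[of x] by (simp add: V_def sgn_div_norm)
  ultimately show "\<exists>c. h = c *\<^sub>R V x"
    by (metis scaleR_scaleR)
qed

lemma F_0: "F 0 = es"
  by (simp add: F_def linear_0[OF linear_M])

lemma norm_es: "norm es = 1"
  by (simp add: norm_eq_sqrt_inner es_unit)

lemma V_0: "V 0 = es"
  by (simp add: V_def F_0 sgn_div_norm norm_es)

lemma cov_deriv_V_0: "cov_deriv V 0 h = J h + 2 *\<^sub>R E h"
proof -
  have "dF 0 h = J h + 2 *\<^sub>R E h"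
    by (simp add: dF_def F_0 M_def inv_minus_i_0 cscale_i cscale_minus_left cscale_1 J_proj E_proj
        proj_def[symmetric] es_proj proj_eq_self)
  then show ?thesis
    using es_dF[of 0 h] by (simp add: cov_deriv_V F_0 V_0 norm_es inner_commute)
qed

lemma not_orth_contact_V:
  assumes "odd CARD('n)"
  shows "\<not> orth_contact V"
proof -
  define k where "k = (CARD('n) - 1) div 2"
  have k: "2 * k + 1 = CARD('n)"
    using assms unfolding k_def by (auto elim!: oddE)
  let ?L = "\<lambda>z. J z + 2 *\<^sub>R E z"
  let ?a = "dual_form V 0" and ?w = "d_dual_form V 0"
  have a: "?a x = es \<bullet> x" for x
    by (simp add: dual_form_def V_0)
  have w: "?w x y = ?L x \<bullet> y - ?L y \<bullet> x" for x y
    by (simp add: d_dual_form_def cov_deriv_V_0)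
  \<comment> \<open>Projecting along \<open>\<kappa>\<close> changes neither form and lands in a hyperplane.\<close>
  define pr where "pr x = x - ((\<kappa> \<bullet> x) / (\<kappa> \<bullet> \<kappa>)) *\<^sub>R \<kappa>" for x
  have a_pr: "?a (pr x) = ?a x" for x
    by (simp add: a pr_def inner_diff_right es_kernel)
  have w_pr: "?w (pr x) (pr y) = ?w x y" for x y
    using kernel_symmetric[of x] kernel_symmetric[of y]
    by (simp add: w pr_def J_E_linear inner_diff_left inner_diff_right inner_add_left
        inner_add_right algebra_simps)
  have "linear ?a"
    by (rule linearI) (simp_all add: a inner_add_right)
  moreover have "bilinear ?w"
    unfolding bilinear_def w
    by (auto intro!: linearI simp: J_E_linear inner_add_left inner_add_right algebra_simps)
  moreover have "dim {x. \<kappa> \<bullet> x = 0} < 2 * k + 1"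
    using dim_hyperplane[OF kernel_nonzero] k by simp
  ultimately have "wedge_alpha_omega_pow k ?a ?w (pr \<circ> v) = 0" for v
    by (rule wedge_alpha_omega_pow_eq_0_if_dim_lt[OF _ _ subspace_hyperplane])
      (use kernel_nonzero in \<open>simp add: pr_def inner_diff_right\<close>)
  moreover have "wedge_alpha_omega_pow k ?a ?w (pr \<circ> v) = wedge_alpha_omega_pow k ?a ?w v" for v
    unfolding wedge_alpha_omega_pow_def by (simp add: a_pr w_pr)
  ultimately show ?thesis
    unfolding orth_contact_def k_def by metis
qed

end

section \<open>Coordinates in odd dimension\<close>

lemma axis_component: "axis i c $ j = (if j = i then c else 0)"
  by (simp add: axis_def)

locale odd_coordinates =
  fixes e :: "nat \<Rightarrow> 'n::finite"
  assumes bij_e: "bij_betw e {..<CARD('n)} UNIV"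
    and odd_card: "odd CARD('n)" and card_ge_5: "CARD('n) \<ge> 5"
begin

definition idx :: "'n \<Rightarrow> nat" where
  "idx i = inv_into {..<CARD('n)} e i"

lemma idx_less: "idx i < CARD('n)"
  unfolding idx_def using bij_e by (metis bij_betw_def inv_into_into lessThan_iff UNIV_I)

lemma e_idx [simp]: "e (idx i) = i"
  unfolding idx_def using bij_e by (simp add: bij_betw_def f_inv_into_f)

lemma idx_e [simp]: "m < CARD('n) \<Longrightarrow> idx (e m) = m"
  unfolding idx_def using bij_e by (simp add: bij_betw_def inv_into_f_f)

definition vert :: 'n where
  "vert = e (CARD('n) - 1)"

definition partner :: "'n \<Rightarrow> 'n" where
  "partner i = e (if even (idx i) then idx i + 1 else idx i - 1)"

lemma partner_props:
  assumes "i \<noteq> vert"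
  shows "partner i \<noteq> vert" "partner (partner i) = i" "even (idx (partner i)) \<longleftrightarrow> odd (idx i)"
proof -
  let ?m = "idx i"
  have "?m \<noteq> CARD('n) - 1"
    using assms by (metis e_idx vert_def)
  then have "?m < CARD('n) - 1"
    using idx_less[of i] by linarith
  then have "idx (partner i) = (if even ?m then ?m + 1 else ?m - 1) \<and>
      (if even ?m then ?m + 1 else ?m - 1) < CARD('n) - 1"
    using odd_card by (auto simp: partner_def elim!: oddE evenE)
  then show "partner i \<noteq> vert" "partner (partner i) = i" "even (idx (partner i)) \<longleftrightarrow> odd (idx i)"
    by (auto simp: partner_def vert_def)
qed

(* Keeps e 1 from being rewritten to e (Suc 0), so that the simp rules below apply. *)
declare One_nat_def [simp del]

lemma e_eq_iff: "m < CARD('n) \<Longrightarrow> m' < CARD('n) \<Longrightarrow> e m = e m' \<longleftrightarrow> m = m'"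
  by (metis idx_e)

lemma distinct_low_coordinates [simp]:
  "e 0 \<noteq> e 1" "e 0 \<noteq> e 2" "e 0 \<noteq> e 3" "e 1 \<noteq> e 2" "e 1 \<noteq> e 3" "e 2 \<noteq> e 3"
  "e 1 \<noteq> e 0" "e 2 \<noteq> e 0" "e 3 \<noteq> e 0" "e 2 \<noteq> e 1" "e 3 \<noteq> e 1" "e 3 \<noteq> e 2"
  "vert \<noteq> e 0" "vert \<noteq> e 1" "vert \<noteq> e 2" "vert \<noteq> e 3"
  "e 0 \<noteq> vert" "e 1 \<noteq> vert" "e 2 \<noteq> vert" "e 3 \<noteq> vert"
  using card_ge_5 by (simp_all add: e_eq_iff vert_def)

lemma partner_eq_iff: "i \<noteq> vert \<Longrightarrow> j \<noteq> vert \<Longrightarrow> partner i = j \<longleftrightarrow> i = partner j"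
  by (metis partner_props(2))

lemma idx_low_coordinates [simp]: "idx (e 0) = 0" "idx (e 1) = 1" "idx (e 2) = 2" "idx (e 3) = 3"
  using card_ge_5 by simp_all

lemma partner_low_coordinates [simp]:
  "partner (e 0) = e 1" "partner (e 1) = e 0" "partner (e 2) = e 3" "partner (e 3) = e 2"
  using card_ge_5 by (simp_all add: partner_def)

definition es :: "real^'n" where
  "es = axis vert 1"

definition J :: "real^'n \<Rightarrow> real^'n" where
  "J x = (\<chi> i. if i = vert then 0 else if even (idx i) then - x $ partner i else x $ partner i)"

definition E :: "real^'n \<Rightarrow> real^'n" where
  "E x = (\<chi> i. if i = e 0 then x $ e 2 else if i = e 1 then x $ e 3 else 0)"

definition \<kappa> :: "real^'n" where
  "\<kappa> = axis (e 0) 1 - axis (e 3) 1"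

lemma fibration_data: "fibration_data es J E \<kappa>"
proof (rule fibration_data.intro)
  show "linear J"
    by (auto intro!: linearI simp: vec_eq_iff J_def)
  show "es \<bullet> es = 1"
    by (simp add: es_def)
  show "linear E"
    by (auto intro!: linearI simp: vec_eq_iff E_def)
  show "J es = 0" "E es = 0"
    by (auto simp: vec_eq_iff J_def E_def es_def axis_component partner_props)
  show "es \<bullet> J x = 0" "es \<bullet> E x = 0" for x
    by (simp_all add: es_def inner_axis' J_def E_def)
  show "J (J x) = (es \<bullet> x) *\<^sub>R es - x" for x
    by (auto simp: vec_eq_iff J_def es_def axis_component inner_axis' partner_props)
  show "E (E x) = 0" for x
    by (simp add: vec_eq_iff E_def)
  show "E (J x) = J (E x)" for x
    by (auto simp: vec_eq_iff J_def E_def partner_eq_iff)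
  show "\<kappa> \<noteq> 0"
    by (auto simp: \<kappa>_def vec_eq_iff axis_component)
  show "es \<bullet> \<kappa> = 0"
    by (simp add: es_def \<kappa>_def inner_axis' axis_component)
  show "(J z + 2 *\<^sub>R E z) \<bullet> \<kappa> = (J \<kappa> + 2 *\<^sub>R E \<kappa>) \<bullet> z" for z
  proof -
    have "J \<kappa> + 2 *\<^sub>R E \<kappa> = axis (e 2) 1 - axis (e 1) 1"
      by (auto simp: vec_eq_iff J_def E_def \<kappa>_def axis_component partner_eq_iff)
    then show ?thesis
      by (simp add: \<kappa>_def inner_diff_right inner_diff_left inner_axis inner_axis' J_def E_def)
  qed
qed

end

theorem theorem1p6:
  assumes "odd CARD('n)" and "CARD('n) \<ge> 5"
  shows "\<exists>V :: real^'n \<Rightarrow> real^'n.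
           line_fibration V \<and> nondegenerate_fibration V \<and> \<not> orth_contact V"
proof -
  obtain e :: "nat \<Rightarrow> 'n" where "bij_betw e {..<CARD('n)} UNIV"
    using ex_bij_betw_nat_finite[of "UNIV :: 'n set"] by (auto simp: atLeast0LessThan)
  then interpret odd_coordinates e
    using assms by unfold_locales
  interpret fib: fibration_data es J E \<kappa>
    by (rule fibration_data)
  show ?thesis
    using fib.line_fibration_V fib.nondegenerate_fibration_V fib.not_orth_contact_V assms(1)
    by blast
qed

end
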